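(* Let $(X,\Gamma)$ be a $(\mu,\nu)$-path system space. For every $\delta\ge0$, $\varepsilon\ge0$, $\theta\ge0$ there exists $L\ge0$ with the following property. Let $Y_0,A_1,Y_1,\dots,A_n,Y_n\subseteq X$ be non-empty subsets forming a $(\delta,\varepsilon,L)$-buffering sequence. Then for every $i\in\{1,\dots,n\}$, $d_{A_i}(Y_0,Y_i)>\theta$.
   Context: A path is a rectifiable continuous map $\alpha\colon[a,b]\to X$ parametrised by arc length; it is a $(\kappa,\lambda)$-quasi-geodesic if $d(\alpha(t),\alpha(t'))\le|t-t'|\le\kappa d(\alpha(t),\alpha(t'))+\lambda$. A $(\mu,\nu)$-path system space $(X,\Gamma)$ is a geodesic metric space $X$ with a collection $\Gamma$ of paths closed under subpaths, such that any two points are joined by an element of $\Gamma$ and every element is a $(\mu,\nu)$-quasi-geodesic. A map $\pi_A\colon X\to A$ onto a subset $A$ is $\delta$-constricting if (CS1) $d(x,\pi_A(x))\le\delta$ for $x\in A$, and (CS2) for all $x,y\in X$ and $\gamma\in\Gamma$ joining $x$ to $y$, if $d(\pi_A(x),\pi_A(y))>\delta$ then $\gamma$ meets $B_X(\pi_A(x),\delta)$ and $B_X(\pi_A(y),\delta)$. Notation: $d_A(x,y)=d(\pi_A(x),\pi_A(y))$, $\operatorname{diam}_A(Y)=\operatorname{diam}(\pi_A(Y))$, $d_A(Y,Z)=d(\pi_A(Y),\pi_A(Z))$ (infimum of distances). A sequence $Y_0,A_1,Y_1,\dots,A_n,Y_n$ of non-empty subsets is $(\delta,\varepsilon,L)$-buffering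 if for each $i\in\{1,\dots,n\}$ there is a $\delta$-constricting map $\pi_{A_i}\colon X\to A_i$ such that: (BS1) if $i\ne n$, $\max\{\operatorname{diam}_{A_i}(A_{i+1}),\operatorname{diam}_{A_{i+1}}(A_i)\}\le\varepsilon$; (BS2) $\max\{\operatorname{diam}_{A_i}(Y_{i-1}),\operatorname{diam}_{A_i}(Y_i)\}\le\varepsilon$; (BS3) $\max\{d(A_i,Y_{i-1}),d(A_i,Y_i)\}\le\varepsilon$; (BS4) $d_{A_i}(Y_{i-1},Y_i)\ge L$. *)

theory Defs
  imports "HOL-Analysis.Analysis"
begin

text \<open>A path is represented as a triple (a, b, alpha): the map alpha restricted to the
interval [a, b].  Only the values of alpha on [a, b] are relevant to the notions below.\<close>

type_synonym 'a rpath = "real \<times> real \<times> (real \<Rightarrow> 'a)"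

definition geodesic_space :: "'a::metric_space itself \<Rightarrow> bool" where
  "geodesic_space _ \<longleftrightarrow>
     (\<forall>x y::'a. \<exists>g::real \<Rightarrow> 'a. g 0 = x \<and> g (dist x y) = y \<and>
        (\<forall>s\<in>{0..dist x y}. \<forall>t\<in>{0..dist x y}. dist (g s) (g t) = \<bar>s - t\<bar>))"

definition variation_sums :: "(real \<Rightarrow> 'a::metric_space) \<Rightarrow> real \<Rightarrow> real \<Rightarrow> real set" where
  "variation_sums \<alpha> s t =
     {(\<Sum>i<k. dist (\<alpha> (p i)) (\<alpha> (p (Suc i)))) | k p.
        p 0 = s \<and> p k = t \<and> (\<forall>i<k. p i \<le> p (Suc i))}"

definition rectifiable_on :: "(real \<Rightarrow> 'a::metric_space) \<Rightarrow> real \<Rightarrow> real \<Rightarrow> bool" where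
  "rectifiable_on \<alpha> a b \<longleftrightarrow> bdd_above (variation_sums \<alpha> a b)"

definition arc_length :: "(real \<Rightarrow> 'a::metric_space) \<Rightarrow> real \<Rightarrow> real \<Rightarrow> real" where
  "arc_length \<alpha> s t = Sup (variation_sums \<alpha> s t)"

definition is_path :: "'a::metric_space rpath \<Rightarrow> bool" where
  "is_path P \<longleftrightarrow> (case P of (a, b, \<alpha>) \<Rightarrow>
     a \<le> b \<and> continuous_on {a..b} \<alpha> \<and> rectifiable_on \<alpha> a b \<and>
     (\<forall>s t. a \<le> s \<longrightarrow> s \<le> t \<longrightarrow> t \<le> b \<longrightarrow> arc_length \<alpha> s t = t - s))"

definition quasi_geodesic :: "real \<Rightarrow> real \<Rightarrow> 'a::metric_space rpath \<Rightarrow> bool" where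
  "quasi_geodesic \<kappa> lam P \<longleftrightarrow> (case P of (a, b, \<alpha>) \<Rightarrow>
     (\<forall>t\<in>{a..b}. \<forall>t'\<in>{a..b}.
        dist (\<alpha> t) (\<alpha> t') \<le> \<bar>t - t'\<bar> \<and> \<bar>t - t'\<bar> \<le> \<kappa> * dist (\<alpha> t) (\<alpha> t') + lam))"

definition joins :: "'a rpath \<Rightarrow> 'a \<Rightarrow> 'a \<Rightarrow> bool" where
  "joins P x y \<longleftrightarrow> (case P of (a, b, \<alpha>) \<Rightarrow> \<alpha> a = x \<and> \<alpha> b = y)"

definition meets :: "'a rpath \<Rightarrow> 'a set \<Rightarrow> bool" where
  "meets P S \<longleftrightarrow> (case P of (a, b, \<alpha>) \<Rightarrow> (\<exists>t\<in>{a..b}. \<alpha> t \<in> S))"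

definition path_system_space :: "real \<Rightarrow> real \<Rightarrow> 'a::metric_space rpath set \<Rightarrow> bool" where
  "path_system_space \<mu> \<nu> \<Gamma> \<longleftrightarrow>
     geodesic_space TYPE('a) \<and>
     (\<forall>P\<in>\<Gamma>. is_path P) \<and>
     (\<forall>a b \<alpha> s t. (a, b, \<alpha>) \<in> \<Gamma> \<longrightarrow> a \<le> s \<longrightarrow> s \<le> t \<longrightarrow> t \<le> b \<longrightarrow> (s, t, \<alpha>) \<in> \<Gamma>) \<and>
     (\<forall>x y. \<exists>P\<in>\<Gamma>. joins P x y) \<and>
     (\<forall>P\<in>\<Gamma>. quasi_geodesic \<mu> \<nu> P)"

definition constricting :: "'a::metric_space rpath set \<Rightarrow> real \<Rightarrow> 'a set \<Rightarrow> ('a \<Rightarrow> 'a) \<Rightarrow> bool" where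
  "constricting \<Gamma> \<delta> A \<pi> \<longleftrightarrow>
     (\<forall>x. \<pi> x \<in> A) \<and>
     (\<forall>x\<in>A. dist x (\<pi> x) \<le> \<delta>) \<and>
     (\<forall>x y P. P \<in> \<Gamma> \<longrightarrow> joins P x y \<longrightarrow> dist (\<pi> x) (\<pi> y) > \<delta> \<longrightarrow>
        meets P (cball (\<pi> x) \<delta>) \<and> meets P (cball (\<pi> y) \<delta>))"

text \<open>diam S <= e, with diam possibly infinite (unfolded).\<close>
definition diam_le :: "'a::metric_space set \<Rightarrow> real \<Rightarrow> bool" where
  "diam_le S e \<longleftrightarrow> (\<forall>u\<in>S. \<forall>v\<in>S. dist u v \<le> e)"

definition buffering :: "'a::metric_space rpath set \<Rightarrow> real \<Rightarrow> real \<Rightarrow> real \<Rightarrow> nat \<Rightarrow>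
    (nat \<Rightarrow> 'a set) \<Rightarrow> (nat \<Rightarrow> 'a set) \<Rightarrow> (nat \<Rightarrow> 'a \<Rightarrow> 'a) \<Rightarrow> bool" where
  "buffering \<Gamma> \<delta> \<epsilon> L n Y A \<pi> \<longleftrightarrow>
     (\<forall>i\<le>n. Y i \<noteq> {}) \<and> (\<forall>i\<in>{1..n}. A i \<noteq> {}) \<and>
     (\<forall>i\<in>{1..n}.
        constricting \<Gamma> \<delta> (A i) (\<pi> i) \<and>
        (i \<noteq> n \<longrightarrow> diam_le (\<pi> i ` A (i+1)) \<epsilon> \<and> diam_le (\<pi> (i+1) ` A i) \<epsilon>) \<and>
        diam_le (\<pi> i ` Y (i-1)) \<epsilon> \<and> diam_le (\<pi> i ` Y i) \<epsilon> \<and>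
        setdist (A i) (Y (i-1)) \<le> \<epsilon> \<and> setdist (A i) (Y i) \<le> \<epsilon> \<and>
        setdist (\<pi> i ` Y (i-1)) (\<pi> i ` Y i) \<ge> L)"

end

theory Submission
  imports Defs
begin

text \<open>Constricting maps are coarsely Lipschitz, and they satisfy a Behrstock-type inequality:
  if \<open>\<pi>B y\<close> is far from \<open>\<pi>B(A)\<close>, a set of small diameter, then \<open>\<pi>A y\<close> is close to
  \<open>\<pi>A (\<pi>B y)\<close>. Otherwise a path in \<open>\<Gamma>\<close> from \<open>y\<close> to a point of \<open>A\<close> would pass near
  \<open>\<pi>B(A)\<close>, then near \<open>\<pi>B y\<close>, then near \<open>\<pi>B(A)\<close> again, a detour no quasi-geodesic can make.
  Now argue by induction on \<open>i\<close>: if \<open>Y 0\<close> and \<open>Y (i-1)\<close> project far apart in \<open>A (i-1)\<close>, then,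
  as \<open>A i\<close> is close to \<open>Y (i-1)\<close>, the inequality puts \<open>\<pi>\<^sub>i(Y 0)\<close> within bounded distance of
  \<open>\<pi>\<^sub>i(A (i-1))\<close> and hence of \<open>\<pi>\<^sub>i(Y (i-1))\<close>, which is at distance at least \<open>L\<close> from
  \<open>\<pi>\<^sub>i(Y i)\<close>.\<close>

lemma quasi_geodesic_abs:
  assumes "quasi_geodesic \<kappa> lam P"
  shows "quasi_geodesic \<bar>\<kappa>\<bar> \<bar>lam\<bar> P"
proof -
  obtain a b \<alpha> where P: "P = (a, b, \<alpha>)" by (cases P) auto
  have le: "\<kappa> * d + lam \<le> \<bar>\<kappa>\<bar> * d + \<bar>lam\<bar>" if "0 \<le> d" for d :: real
    using mult_right_mono[OF abs_ge_self[of \<kappa>] that] abs_ge_self[of lam] by linarith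
  show ?thesis
    unfolding quasi_geodesic_def P prod.case
  proof (intro ballI conjI)
    fix t t' assume "t \<in> {a..b}" "t' \<in> {a..b}"
    then have "dist (\<alpha> t) (\<alpha> t') \<le> \<bar>t - t'\<bar> \<and> \<bar>t - t'\<bar> \<le> \<kappa> * dist (\<alpha> t) (\<alpha> t') + lam"
      using assms unfolding quasi_geodesic_def P by simp
    then show "dist (\<alpha> t) (\<alpha> t') \<le> \<bar>t - t'\<bar>" "\<bar>t - t'\<bar> \<le> \<bar>\<kappa>\<bar> * dist (\<alpha> t) (\<alpha> t') + \<bar>lam\<bar>"
      using le[OF zero_le_dist] by (blast intro: order_trans)+
  qed
qed

lemma path_system_space_abs:
  "path_system_space \<mu> \<nu> \<Gamma> \<Longrightarrow> path_system_space \<bar>\<mu>\<bar> \<bar>\<nu>\<bar> \<Gamma>"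
  unfolding path_system_space_def using quasi_geodesic_abs by blast

lemma constricting_range: "constricting \<Gamma> \<delta> A \<pi> \<Longrightarrow> \<pi> x \<in> A"
  unfolding constricting_def by blast

lemma constricting_near_self: "constricting \<Gamma> \<delta> A \<pi> \<Longrightarrow> x \<in> A \<Longrightarrow> dist x (\<pi> x) \<le> \<delta>"
  unfolding constricting_def by blast

lemma constricting_meets:
  assumes "constricting \<Gamma> \<delta> A \<pi>" "(a0, b0, \<alpha>) \<in> \<Gamma>" "\<alpha> a0 = x" "\<alpha> b0 = y"
    and "\<delta> < dist (\<pi> x) (\<pi> y)"
  shows "\<exists>t\<in>{a0..b0}. dist (\<alpha> t) (\<pi> x) \<le> \<delta>" "\<exists>t\<in>{a0..b0}. dist (\<alpha> t) (\<pi> y) \<le> \<delta>"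
  using assms unfolding constricting_def meets_def joins_def by (auto simp: dist_commute)

lemma diam_le_nonneg: "diam_le S e \<Longrightarrow> x \<in> S \<Longrightarrow> 0 \<le> e"
  unfolding diam_le_def using zero_le_dist order_trans by blast

lemma setdist_ge_if_near:
  fixes S S' R :: "'a::metric_space set"
  assumes "S' \<noteq> {}" "R \<noteq> {}" and near: "\<forall>u\<in>S'. \<exists>s\<in>S. dist u s \<le> C"
  shows "setdist S R - C \<le> setdist S' R"
proof (rule le_setdistI[OF assms(1,2)])
  fix u w assume "u \<in> S'" "w \<in> R"
  then obtain s where "s \<in> S" "dist u s \<le> C" using near by blast
  with \<open>w \<in> R\<close> have "setdist S R \<le> dist s w" by (intro setdist_le_dist)
  then show "setdist S R - C \<le> dist u w"
    using \<open>dist u s \<le> C\<close> dist_triangle[of s w u] by (simp add: dist_commute)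
qed

lemma bufferingD:
  assumes "buffering \<Gamma> \<delta> \<epsilon> L n Y A \<pi>" "i \<in> {1..n}"
  shows "constricting \<Gamma> \<delta> (A i) (\<pi> i)" "A i \<noteq> {}" "Y (i - 1) \<noteq> {}" "Y i \<noteq> {}"
    "i \<noteq> n \<Longrightarrow> diam_le (\<pi> i ` A (Suc i)) \<epsilon>" "i \<noteq> n \<Longrightarrow> diam_le (\<pi> (Suc i) ` A i) \<epsilon>"
    "setdist (A i) (Y (i - 1)) \<le> \<epsilon>" "setdist (A i) (Y i) \<le> \<epsilon>"
    "L \<le> setdist (\<pi> i ` Y (i - 1)) (\<pi> i ` Y i)"
  using assms unfolding buffering_def by auto

text \<open>By \<open>path_system_space_abs\<close> the quasi-geodesic constants may be taken non-negative;
  \<open>\<delta>\<close> is the constriction constant.\<close>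

locale path_system =
  fixes \<mu> \<nu> :: real and \<Gamma> :: "'a::metric_space rpath set" and \<delta> :: real
  assumes path_system: "path_system_space \<mu> \<nu> \<Gamma>"
    and mu_nonneg: "0 \<le> \<mu>" and nu_nonneg: "0 \<le> \<nu>" and delta_nonneg: "0 \<le> \<delta>"
begin

definition coarse_bound :: "real \<Rightarrow> real" where
  "coarse_bound r = \<mu> * r + \<nu> + 3 * \<delta>"

definition behrstock_bound :: "real \<Rightarrow> real" where
  "behrstock_bound \<epsilon> =
     2 * coarse_bound \<delta> + \<epsilon> + 4 * \<delta> + \<mu> * (2 * \<delta> + coarse_bound \<delta> + \<epsilon>) + \<nu>"

lemma coarse_bound_nonneg: "0 \<le> r \<Longrightarrow> 0 \<le> coarse_bound r"
  unfolding coarse_bound_def using mu_nonneg nu_nonneg delta_nonneg by simp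

lemma obtain_path:
  obtains a0 b0 \<alpha> where "(a0, b0, \<alpha>) \<in> \<Gamma>" "\<alpha> a0 = x" "\<alpha> b0 = y"
proof -
  obtain P where "P \<in> \<Gamma>" "joins P x y"
    using path_system unfolding path_system_space_def by blast
  with that show thesis by (cases P) (auto simp: joins_def)
qed

lemma subpath_mem:
  "(a0, b0, \<alpha>) \<in> \<Gamma> \<Longrightarrow> a0 \<le> s \<Longrightarrow> s \<le> t \<Longrightarrow> t \<le> b0 \<Longrightarrow> (s, t, \<alpha>) \<in> \<Gamma>"
  using path_system unfolding path_system_space_def by blast

lemma path_quasi_geodesic:
  assumes "(a0, b0, \<alpha>) \<in> \<Gamma>" "t \<in> {a0..b0}" "t' \<in> {a0..b0}"
  shows "dist (\<alpha> t) (\<alpha> t') \<le> \<bar>t - t'\<bar>" "\<bar>t - t'\<bar> \<le> \<mu> * dist (\<alpha> t) (\<alpha> t') + \<nu>"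
proof -
  have "quasi_geodesic \<mu> \<nu> (a0, b0, \<alpha>)"
    using path_system assms(1) unfolding path_system_space_def by blast
  then show "dist (\<alpha> t) (\<alpha> t') \<le> \<bar>t - t'\<bar>" "\<bar>t - t'\<bar> \<le> \<mu> * dist (\<alpha> t) (\<alpha> t') + \<nu>"
    using assms(2,3) unfolding quasi_geodesic_def by auto
qed

lemma path_detour:
  assumes "(a0, b0, \<alpha>) \<in> \<Gamma>" "a0 \<le> t1" "t1 \<le> t2" "t2 \<le> t3" "t3 \<le> b0"
  shows "dist (\<alpha> t1) (\<alpha> t2) + dist (\<alpha> t2) (\<alpha> t3) \<le> \<mu> * dist (\<alpha> t1) (\<alpha> t3) + \<nu>"
  using path_quasi_geodesic[OF assms(1), of t1 t2] path_quasi_geodesic[OF assms(1), of t2 t3]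
    path_quasi_geodesic(2)[OF assms(1), of t1 t3] assms(2-5)
  by auto

text \<open>If \<open>\<pi> x\<close> and \<open>\<pi> y\<close> are \<open>\<delta>\<close>-close there is nothing to show; otherwise a path from
  \<open>x\<close> to \<open>y\<close> passes near both, and its length is controlled by \<open>dist x y\<close>.\<close>

lemma constricting_coarse_lipschitz:
  assumes c: "constricting \<Gamma> \<delta> A \<pi>" and xy: "dist x y \<le> r"
  shows "dist (\<pi> x) (\<pi> y) \<le> coarse_bound r"
proof (cases "\<delta> < dist (\<pi> x) (\<pi> y)")
  case False
  have "0 \<le> \<mu> * r" using mu_nonneg order_trans[OF zero_le_dist xy] by simp
  then show ?thesis using False nu_nonneg delta_nonneg unfolding coarse_bound_def by linarith
next
  case True
  obtain a0 b0 \<alpha> where P: "(a0, b0, \<alpha>) \<in> \<Gamma>" "\<alpha> a0 = x" "\<alpha> b0 = y" by (rule obtain_path)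
  obtain t t' where t: "t \<in> {a0..b0}" "t' \<in> {a0..b0}"
    and near: "dist (\<alpha> t) (\<pi> x) \<le> \<delta>" "dist (\<alpha> t') (\<pi> y) \<le> \<delta>"
    using constricting_meets[OF c P True] by blast
  have "dist (\<alpha> t) (\<alpha> t') \<le> \<bar>a0 - b0\<bar>"
    using path_quasi_geodesic(1)[OF P(1) t] t by auto
  also have "\<dots> \<le> \<mu> * dist x y + \<nu>"
    using path_quasi_geodesic(2)[OF P(1), of a0 b0] t P(2,3) by auto
  also have "\<dots> \<le> \<mu> * r + \<nu>" using mult_left_mono[OF xy mu_nonneg] by simp
  finally have "dist (\<alpha> t) (\<alpha> t') \<le> \<mu> * r + \<nu>" .
  then show ?thesis
    using near delta_nonneg dist_triangle[of "\<pi> x" "\<pi> y" "\<alpha> t"] dist_triangle[of "\<alpha> t" "\<pi> y" "\<alpha> t'"]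
    unfolding coarse_bound_def by (simp add: dist_commute)
qed

lemma constricting_near_proj:
  assumes c: "constricting \<Gamma> \<delta> A \<pi>" and "dist p (\<pi> x) \<le> \<delta>"
  shows "dist (\<pi> p) (\<pi> x) \<le> coarse_bound \<delta> + \<delta>"
  using constricting_coarse_lipschitz[OF c assms(2)] constricting_near_self[OF c constricting_range[OF c, of x]]
    dist_triangle[of "\<pi> p" "\<pi> x" "\<pi> (\<pi> x)"]
  by (simp add: dist_commute)

text \<open>Along any path from \<open>x\<close> to \<open>z\<close> the path first passes near \<open>\<pi> x\<close>, and only afterwards
  near \<open>\<pi> z\<close>: a point near \<open>\<pi> x\<close> projects close to \<open>\<pi> x\<close>, so the remaining subpath
  still has far-apart projections of its endpoints.\<close>

lemma constricting_visits_in_order: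
  assumes c: "constricting \<Gamma> \<delta> A \<pi>"
    and P: "(a0, b0, \<alpha>) \<in> \<Gamma>" "\<alpha> a0 = x" "\<alpha> b0 = z"
    and far: "\<mu> * \<delta> + \<nu> + 5 * \<delta> < dist (\<pi> x) (\<pi> z)"
  obtains s t where "a0 \<le> s" "s \<le> t" "t \<le> b0"
    "dist (\<alpha> s) (\<pi> x) \<le> \<delta>" "dist (\<alpha> t) (\<pi> z) \<le> \<delta>"
proof -
  have "\<delta> < dist (\<pi> x) (\<pi> z)"
    using far mult_nonneg_nonneg[OF mu_nonneg delta_nonneg] nu_nonneg delta_nonneg by linarith
  then obtain s where s: "s \<in> {a0..b0}" "dist (\<alpha> s) (\<pi> x) \<le> \<delta>"
    using constricting_meets(1)[OF c P] by blast
  then have "\<delta> < dist (\<pi> (\<alpha> s)) (\<pi> z)"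
    using far constricting_near_proj[OF c s(2)] dist_triangle[of "\<pi> x" "\<pi> z" "\<pi> (\<alpha> s)"]
    unfolding coarse_bound_def by (simp add: dist_commute)
  then obtain t where "t \<in> {s..b0}" "dist (\<alpha> t) (\<pi> z) \<le> \<delta>"
    using constricting_meets(2)[OF c subpath_mem[OF P(1), of s b0] refl P(3)] s by auto
  with s that show ?thesis by auto
qed

lemma path_meets_near_proj_image:
  assumes cB: "constricting \<Gamma> \<delta> B \<pi>B" and cA: "constricting \<Gamma> \<delta> A \<pi>A"
    and diam: "diam_le (\<pi>B ` A) \<epsilon>" and a: "a \<in> A"
    and P: "(a0, b0, \<alpha>) \<in> \<Gamma>" "\<alpha> a0 = y" "\<alpha> b0 = z"
    and far: "\<delta> < dist (\<pi>A y) (\<pi>A z)"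
  obtains r where "r \<in> {a0..b0}" "dist (\<pi>B (\<alpha> r)) (\<pi>B a) \<le> coarse_bound \<delta> + \<epsilon>"
proof -
  obtain r where r: "r \<in> {a0..b0}" "dist (\<alpha> r) (\<pi>A y) \<le> \<delta>"
    using constricting_meets(1)[OF cA P far] by blast
  have "dist (\<pi>B (\<alpha> r)) (\<pi>B (\<pi>A y)) \<le> coarse_bound \<delta>"
    using constricting_coarse_lipschitz[OF cB r(2)] .
  moreover have "dist (\<pi>B (\<pi>A y)) (\<pi>B a) \<le> \<epsilon>"
    using diam a constricting_range[OF cA] unfolding diam_le_def by blast
  ultimately have "dist (\<pi>B (\<alpha> r)) (\<pi>B a) \<le> coarse_bound \<delta> + \<epsilon>"
    using dist_triangle[of "\<pi>B (\<alpha> r)" "\<pi>B a" "\<pi>B (\<pi>A y)"] by linarith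
  with r(1) that show ?thesis by blast
qed

lemma behrstock_near_start:
  assumes cB: "constricting \<Gamma> \<delta> B \<pi>B" and cA: "constricting \<Gamma> \<delta> A \<pi>A"
    and diam: "diam_le (\<pi>B ` A) \<epsilon>" and a: "a \<in> A"
    and P: "(a0, b0, \<alpha>) \<in> \<Gamma>" "\<alpha> a0 = y" "\<alpha> b0 = a"
    and st: "a0 \<le> s" "s \<le> t" "t \<le> b0" "dist (\<alpha> s) (\<pi>B y) \<le> \<delta>" "dist (\<alpha> t) (\<pi>B a) \<le> \<delta>"
    and far: "behrstock_bound \<epsilon> < dist (\<pi>B y) (\<pi>B a)"
  shows "dist (\<pi>A y) (\<pi>A (\<alpha> s)) \<le> \<delta>"
proof (rule ccontr)
  define K where "K = coarse_bound \<delta>"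
  define E where "E = K + \<epsilon>"
  have "0 \<le> \<epsilon>" using diam_le_nonneg[OF diam imageI[OF a]] .
  then have K: "0 \<le> K" and E: "0 \<le> E"
    unfolding E_def K_def using coarse_bound_nonneg delta_nonneg by auto
  assume "\<not> ?thesis"
  then obtain r where r: "r \<in> {a0..s}" and r_near_a: "dist (\<pi>B (\<alpha> r)) (\<pi>B a) \<le> E"
    using path_meets_near_proj_image[OF cB cA diam a subpath_mem[OF P(1) order_refl st(1)] P(2) refl]
      st unfolding E_def K_def by auto
  have s_near_y: "dist (\<pi>B (\<alpha> s)) (\<pi>B y) \<le> K + \<delta>"
    unfolding K_def using constricting_near_proj[OF cB st(4)] .
  have r_far_y: "dist (\<pi>B y) (\<pi>B a) - E \<le> dist (\<pi>B (\<alpha> r)) (\<pi>B y)"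
    using r_near_a dist_triangle[of "\<pi>B y" "\<pi>B a" "\<pi>B (\<alpha> r)"] by (simp add: dist_commute)
  have "\<delta> < dist (\<pi>B (\<alpha> r)) (\<pi>B (\<alpha> s))"
    using far r_far_y s_near_y dist_triangle[of "\<pi>B (\<alpha> r)" "\<pi>B y" "\<pi>B (\<alpha> s)"]
      mult_nonneg_nonneg[OF mu_nonneg, of "2 * \<delta> + K + \<epsilon>"] K nu_nonneg delta_nonneg \<open>0 \<le> \<epsilon>\<close>
    unfolding behrstock_bound_def K_def[symmetric] E_def by (simp add: dist_commute)
  then obtain w where w: "w \<in> {r..s}" "dist (\<alpha> w) (\<pi>B (\<alpha> r)) \<le> \<delta>"
    using constricting_meets(1)[OF cB subpath_mem[OF P(1), of r s] refl refl] r st by auto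
  text \<open>The path runs from near \<open>\<pi>B a\<close> (at \<open>w\<close>) via near \<open>\<pi>B y\<close> (at \<open>s\<close>) back to near
    \<open>\<pi>B a\<close> (at \<open>t\<close>): a detour that is too long for a quasi-geodesic.\<close>
  have "dist (\<alpha> w) (\<alpha> s) + dist (\<alpha> s) (\<alpha> t) \<le> \<mu> * dist (\<alpha> w) (\<alpha> t) + \<nu>"
    using path_detour[OF P(1), of w s t] r w st by auto
  moreover have "dist (\<alpha> w) (\<alpha> t) \<le> 2 * \<delta> + E"
    using w(2) r_near_a st(5) dist_triangle[of "\<alpha> w" "\<alpha> t" "\<pi>B (\<alpha> r)"]
      dist_triangle[of "\<pi>B (\<alpha> r)" "\<alpha> t" "\<pi>B a"]
    by (simp add: dist_commute)
  then have "\<mu> * dist (\<alpha> w) (\<alpha> t) \<le> \<mu> * (2 * \<delta> + E)"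
    using mult_left_mono mu_nonneg by blast
  moreover have "dist (\<pi>B y) (\<pi>B a) - E - 2 * \<delta> \<le> dist (\<alpha> w) (\<alpha> s)"
    using r_far_y w(2) st(4) dist_triangle[of "\<pi>B (\<alpha> r)" "\<pi>B y" "\<alpha> w"]
      dist_triangle[of "\<alpha> w" "\<pi>B y" "\<alpha> s"]
    by (simp add: dist_commute)
  moreover have "dist (\<pi>B y) (\<pi>B a) - 2 * \<delta> \<le> dist (\<alpha> s) (\<alpha> t)"
    using st(4,5) dist_triangle[of "\<pi>B y" "\<pi>B a" "\<alpha> s"] dist_triangle[of "\<alpha> s" "\<pi>B a" "\<alpha> t"]
    by (simp add: dist_commute)
  ultimately show False
    using far K E nu_nonneg delta_nonneg mult_nonneg_nonneg[OF mu_nonneg, of "2 * \<delta> + E"]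
    unfolding behrstock_bound_def K_def[symmetric] E_def by (simp add: algebra_simps)
qed

lemma constricting_behrstock:
  assumes cB: "constricting \<Gamma> \<delta> B \<pi>B" and cA: "constricting \<Gamma> \<delta> A \<pi>A"
    and diam: "diam_le (\<pi>B ` A) \<epsilon>" and a: "a \<in> A"
    and far: "behrstock_bound \<epsilon> < dist (\<pi>B y) (\<pi>B a)"
  shows "dist (\<pi>A y) (\<pi>A (\<pi>B y)) \<le> \<delta> + coarse_bound \<delta>"
proof -
  obtain a0 b0 \<alpha> where P: "(a0, b0, \<alpha>) \<in> \<Gamma>" "\<alpha> a0 = y" "\<alpha> b0 = a" by (rule obtain_path)
  have "0 \<le> \<epsilon>" using diam_le_nonneg[OF diam imageI[OF a]] .
  then have "\<mu> * \<delta> + \<nu> + 5 * \<delta> < dist (\<pi>B y) (\<pi>B a)"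
    using far coarse_bound_nonneg[OF delta_nonneg] delta_nonneg nu_nonneg
      mult_nonneg_nonneg[OF mu_nonneg, of "2 * \<delta> + coarse_bound \<delta> + \<epsilon>"]
    unfolding behrstock_bound_def by (simp add: coarse_bound_def)
  then obtain s t where st: "a0 \<le> s" "s \<le> t" "t \<le> b0"
    "dist (\<alpha> s) (\<pi>B y) \<le> \<delta>" "dist (\<alpha> t) (\<pi>B a) \<le> \<delta>"
    using constricting_visits_in_order[OF cB P] by blast
  have "dist (\<pi>A y) (\<pi>A (\<alpha> s)) \<le> \<delta>"
    using behrstock_near_start[OF cB cA diam a P st far] .
  moreover have "dist (\<pi>A (\<alpha> s)) (\<pi>A (\<pi>B y)) \<le> coarse_bound \<delta>"
    using constricting_coarse_lipschitz[OF cA st(4)] .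
  ultimately show ?thesis
    using dist_triangle[of "\<pi>A y" "\<pi>A (\<pi>B y)" "\<pi>A (\<alpha> s)"] by linarith
qed

lemma proj_near_of_proj_far:
  assumes cB: "constricting \<Gamma> \<delta> B \<pi>B" and cA: "constricting \<Gamma> \<delta> A \<pi>A"
    and diam: "diam_le (\<pi>B ` A) \<epsilon>" "diam_le (\<pi>A ` B) \<epsilon>"
    and close: "setdist A Z \<le> \<epsilon>" "setdist B Z \<le> \<epsilon>"
    and ne: "A \<noteq> {}" "B \<noteq> {}" "Z \<noteq> {}"
    and far: "\<forall>z\<in>Z. behrstock_bound \<epsilon> + coarse_bound (\<epsilon> + 1) < dist (\<pi>B y) (\<pi>B z)"
  shows "\<exists>z\<in>Z. dist (\<pi>A y) (\<pi>A z) \<le> \<delta> + coarse_bound \<delta> + \<epsilon> + coarse_bound (\<epsilon> + 1)"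
proof -
  obtain a z where az: "a \<in> A" "z \<in> Z" "dist a z < \<epsilon> + 1"
    using setdist_ltE[of A Z "\<epsilon> + 1"] close(1) ne(1,3) by auto
  have "dist (\<pi>B z) (\<pi>B a) \<le> coarse_bound (\<epsilon> + 1)"
    using constricting_coarse_lipschitz[OF cB, of z a] az(3) by (simp add: dist_commute)
  moreover have "behrstock_bound \<epsilon> + coarse_bound (\<epsilon> + 1) < dist (\<pi>B y) (\<pi>B z)"
    using far az(2) by blast
  ultimately have "behrstock_bound \<epsilon> < dist (\<pi>B y) (\<pi>B a)"
    using dist_triangle[of "\<pi>B y" "\<pi>B z" "\<pi>B a"] dist_commute[of "\<pi>B a" "\<pi>B z"] by linarith
  then have "dist (\<pi>A y) (\<pi>A (\<pi>B y)) \<le> \<delta> + coarse_bound \<delta>"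
    using constricting_behrstock[OF cB cA diam(1) az(1)] by blast
  moreover obtain b z' where bz: "b \<in> B" "z' \<in> Z" "dist b z' < \<epsilon> + 1"
    using setdist_ltE[of B Z "\<epsilon> + 1"] close(2) ne(2,3) by auto
  moreover have "dist (\<pi>A (\<pi>B y)) (\<pi>A b) \<le> \<epsilon>"
    using diam(2) constricting_range[OF cB] bz(1) unfolding diam_le_def by blast
  moreover have "dist (\<pi>A b) (\<pi>A z') \<le> coarse_bound (\<epsilon> + 1)"
    using constricting_coarse_lipschitz[OF cA, of b z'] bz(3) by simp
  ultimately show ?thesis
    using dist_triangle[of "\<pi>A y" "\<pi>A z'" "\<pi>A (\<pi>B y)"] dist_triangle[of "\<pi>A (\<pi>B y)" "\<pi>A z'" "\<pi>A b"]
    by (intro bexI[of _ z']) linarith+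
qed

lemma buffering_setdist_gt:
  assumes buf: "buffering \<Gamma> \<delta> \<epsilon> L n Y A \<pi>" and "0 \<le> \<epsilon>"
    and T: "behrstock_bound \<epsilon> + coarse_bound (\<epsilon> + 1) \<le> T"
    and L: "T + (\<delta> + coarse_bound \<delta> + \<epsilon> + coarse_bound (\<epsilon> + 1)) < L"
    and i: "1 \<le> i" "i \<le> n"
  shows "T < setdist (\<pi> i ` Y 0) (\<pi> i ` Y i)"
  using i
proof (induction i rule: nat_induct_at_least)
  case base
  have "0 \<le> \<delta> + coarse_bound \<delta> + \<epsilon> + coarse_bound (\<epsilon> + 1)"
    using coarse_bound_nonneg delta_nonneg \<open>0 \<le> \<epsilon>\<close> by simp
  moreover have "L \<le> setdist (\<pi> 1 ` Y 0) (\<pi> 1 ` Y 1)"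
    using bufferingD(9)[OF buf, of 1] base by simp
  ultimately show ?case using L by linarith
next
  case (Suc j)
  have j: "j \<in> {1..n}" "Suc j \<in> {1..n}" using Suc by auto
  have c: "constricting \<Gamma> \<delta> (A j) (\<pi> j)" "constricting \<Gamma> \<delta> (A (Suc j)) (\<pi> (Suc j))"
    using bufferingD(1)[OF buf] j by auto
  have diam: "diam_le (\<pi> j ` A (Suc j)) \<epsilon>" "diam_le (\<pi> (Suc j) ` A j) \<epsilon>"
    using bufferingD(5,6)[OF buf j(1)] Suc.prems by auto
  have close: "setdist (A (Suc j)) (Y j) \<le> \<epsilon>" "setdist (A j) (Y j) \<le> \<epsilon>"
    using bufferingD(7)[OF buf j(2)] bufferingD(8)[OF buf j(1)] by auto
  have sep: "L \<le> setdist (\<pi> (Suc j) ` Y j) (\<pi> (Suc j) ` Y (Suc j))"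
    using bufferingD(9)[OF buf j(2)] by simp
  have ne: "A (Suc j) \<noteq> {}" "A j \<noteq> {}" "Y j \<noteq> {}" "Y 0 \<noteq> {}" "Y (Suc j) \<noteq> {}"
    using bufferingD(2,4)[OF buf] bufferingD(3)[OF buf, of 1] j by auto
  have "\<forall>u\<in>\<pi> (Suc j) ` Y 0. \<exists>v\<in>\<pi> (Suc j) ` Y j.
          dist u v \<le> \<delta> + coarse_bound \<delta> + \<epsilon> + coarse_bound (\<epsilon> + 1)"
  proof
    fix u assume "u \<in> \<pi> (Suc j) ` Y 0"
    then obtain y where y: "y \<in> Y 0" "u = \<pi> (Suc j) y" by blast
    have "\<forall>z\<in>Y j. behrstock_bound \<epsilon> + coarse_bound (\<epsilon> + 1) < dist (\<pi> j y) (\<pi> j z)"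
    proof
      fix z assume "z \<in> Y j"
      then have "setdist (\<pi> j ` Y 0) (\<pi> j ` Y j) \<le> dist (\<pi> j y) (\<pi> j z)"
        using y(1) by (intro setdist_le_dist) auto
      then show "behrstock_bound \<epsilon> + coarse_bound (\<epsilon> + 1) < dist (\<pi> j y) (\<pi> j z)"
        using Suc.IH Suc.prems T by linarith
    qed
    then show "\<exists>v\<in>\<pi> (Suc j) ` Y j. dist u v \<le> \<delta> + coarse_bound \<delta> + \<epsilon> + coarse_bound (\<epsilon> + 1)"
      using proj_near_of_proj_far[OF c diam close ne(1-3)] y(2) by blast
  qed
  then have "setdist (\<pi> (Suc j) ` Y j) (\<pi> (Suc j) ` Y (Suc j))
      - (\<delta> + coarse_bound \<delta> + \<epsilon> + coarse_bound (\<epsilon> + 1))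
      \<le> setdist (\<pi> (Suc j) ` Y 0) (\<pi> (Suc j) ` Y (Suc j))"
    using ne(4,5) by (intro setdist_ge_if_near) auto
  then show ?case using sep L by linarith
qed

end

theorem mainTheorem9:
  fixes \<mu> \<nu> :: real and \<Gamma> :: "'a::metric_space rpath set"
  assumes "path_system_space \<mu> \<nu> \<Gamma>"
  shows "\<forall>\<delta>\<ge>0. \<forall>\<epsilon>\<ge>0. \<forall>\<theta>\<ge>0. \<exists>L\<ge>0. \<forall>n Y A \<pi>.
           buffering \<Gamma> \<delta> \<epsilon> L n Y A \<pi> \<longrightarrow>
           (\<forall>i\<in>{1..n}. setdist (\<pi> i ` Y 0) (\<pi> i ` Y i) > \<theta>)"
proof (intro allI impI)
  fix \<delta> \<epsilon> \<theta> :: real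
  assume "0 \<le> \<delta>" "0 \<le> \<epsilon>" "0 \<le> \<theta>"
  interpret path_system "\<bar>\<mu>\<bar>" "\<bar>\<nu>\<bar>" \<Gamma> \<delta>
    using path_system_space_abs[OF assms] \<open>0 \<le> \<delta>\<close> by unfold_locales auto
  define T where "T = max \<theta> (behrstock_bound \<epsilon> + coarse_bound (\<epsilon> + 1))"
  define L where "L = T + (\<delta> + coarse_bound \<delta> + \<epsilon> + coarse_bound (\<epsilon> + 1)) + 1"
  have "0 \<le> L"
    using \<open>0 \<le> \<theta>\<close> \<open>0 \<le> \<delta>\<close> \<open>0 \<le> \<epsilon>\<close> coarse_bound_nonneg[of \<delta>] coarse_bound_nonneg[of "\<epsilon> + 1"]
    unfolding L_def T_def by linarith
  moreover have "\<theta> < setdist (\<pi> i ` Y 0) (\<pi> i ` Y i)"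
    if "buffering \<Gamma> \<delta> \<epsilon> L n Y A \<pi>" "i \<in> {1..n}" for n Y A \<pi> i
    using buffering_setdist_gt[OF that(1) \<open>0 \<le> \<epsilon>\<close>, of T i] that(2)
    unfolding L_def T_def by auto
  ultimately show "\<exists>L\<ge>0. \<forall>n Y A \<pi>. buffering \<Gamma> \<delta> \<epsilon> L n Y A \<pi> \<longrightarrow>
           (\<forall>i\<in>{1..n}. setdist (\<pi> i ` Y 0) (\<pi> i ` Y i) > \<theta>)"
    by blast
qed

end
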